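(* Let $(X_n)_{n\in\mathbb{N}}$ be a sequence of random matrices with $X_n\in M_n^{sa}$ having property $\mathcal{L}$. Then the sequence of probability measures $\mathbb{E} L_n^{\frac{1}{\sqrt{n}}X_n}$ is tight.
   Context: $M_n^{sa}$ denotes the space of $n\times n$ complex Hermitian matrices. For a random Hermitian $n\times n$ matrix $X$ with eigenvalues $\lambda_1\le\dots\le\lambda_n$, $L_n^X=\frac1n\sum_{i=1}^n\delta_{\lambda_i}$ and $\mathbb{E}L_n^X$ is the probability measure $A\mapsto\mathbb{E}(L_n^X(A))$. A sequence of random matrices $X_n\in M_n$ has property $\mathcal{L}$ if for every $\varepsilon>0$, \[ \lim_{M\to\infty}\limsup_{n\to\infty}\mathbb{P}\Big(\frac1{n^2}\sum_{i,j=1}^n|(X_n)_{ij}|^2\mathbf{1}_{\{|(X_n)_{ij}|>M\}}>\varepsilon\Big)=0. \] *)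

theory Defs
  imports "HOL-Probability.Probability" "Jordan_Normal_Form.Char_Poly"
begin

text \<open>An n x n complex matrix represented as a function of the indices (only i,j < n matter).\<close>

definition hermitian_fun :: "nat \<Rightarrow> (nat \<Rightarrow> nat \<Rightarrow> complex) \<Rightarrow> bool" where
  "hermitian_fun n A \<longleftrightarrow> (\<forall>i<n. \<forall>j<n. A i j = cnj (A j i))"

definition to_mat :: "nat \<Rightarrow> (nat \<Rightarrow> nat \<Rightarrow> complex) \<Rightarrow> complex mat" where
  "to_mat n A = mat n n (\<lambda>(i,j). A i j)"

definition eig_count :: "complex mat \<Rightarrow> real set \<Rightarrow> nat" where
  "eig_count A S = (\<Sum>x\<in>{x::real. x \<in> S \<and> poly (char_poly A) (complex_of_real x) = 0}.
       order (complex_of_real x) (char_poly A))"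

definition esd :: "nat \<Rightarrow> (nat \<Rightarrow> nat \<Rightarrow> complex) \<Rightarrow> real set \<Rightarrow> real" where
  "esd n A S = real (eig_count (to_mat n A) S) / real n"

definition property_L :: "'a measure \<Rightarrow> (nat \<Rightarrow> 'a \<Rightarrow> nat \<Rightarrow> nat \<Rightarrow> complex) \<Rightarrow> bool" where
  "property_L P X \<longleftrightarrow> (\<forall>\<epsilon>>0.
     ((\<lambda>M::real. limsup (\<lambda>n. ereal (measure P {\<omega>\<in>space P.
         (1 / real n ^ 2) * (\<Sum>i<n. \<Sum>j<n. (if cmod (X n \<omega> i j) > M then cmod (X n \<omega> i j) ^ 2 else 0))
           > \<epsilon>})))
      \<longlongrightarrow> 0) at_top)"

end

theory Submission
  imports Defs "Jordan_Normal_Form.Schur_Decomposition" "HOL-Real_Asymp.Real_Asymp"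
begin

text \<open>The eigenvalues of a Hermitian matrix are real, and the sum of their squares is the squared
  Frobenius norm (the trace of \<open>A\<^sup>2\<close>, read off from a Schur triangularisation). A Chebyshev
  count therefore bounds the fraction of eigenvalues of \<open>X\<^sub>n/\<surd>n\<close> outside \<open>[-K, K]\<close> by
  \<open>\<parallel>X\<^sub>n\<parallel>\<^sub>F\<^sup>2/(n\<^sup>2K\<^sup>2)\<close>. Property L keeps \<open>\<parallel>X\<^sub>n\<parallel>\<^sub>F\<^sup>2/n\<^sup>2 \<le> M\<^sup>2 + 1\<close> outside an event of
  small probability, uniformly in all large \<open>n\<close>; the finitely many remaining \<open>n\<close> are handled
  one at a time, each single real random variable being tight.\<close>

section \<open>Eigenvalue counts of Hermitian matrices\<close>

lemma order_prod_linear_factors: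
  "Polynomial.order (x::'a::idom) (\<Prod>a\<leftarrow>as. [:- a, 1:]) = count_list as x"
proof (induction as)
  case Nil
  then show ?case by (simp add: order_0I)
next
  case (Cons a as)
  have "[:- a, 1:] * (\<Prod>a\<leftarrow>as. [:- a, 1:]) \<noteq> 0"
    using prod_list_zero_iff[of "map (\<lambda>a. [:- a, 1:]) (a # as)"] by auto
  then have "Polynomial.order x (\<Prod>a\<leftarrow>a # as. [:- a, 1:])
      = Polynomial.order x [:- a, 1:] + Polynomial.order x (\<Prod>a\<leftarrow>as. [:- a, 1:])"
    by (simp only: list.map prod_list.Cons) (rule order_mult)
  then show ?case using Cons by (simp add: order_linear')
qed

lemma count_list_filter: "count_list (filter Q xs) x = (if Q x then count_list xs x else 0)"
  by (induction xs) auto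

lemma eig_count_char_poly_factors:
  assumes "char_poly A = (\<Prod>a\<leftarrow>as. [:- a, 1:])"
  shows "eig_count A S = length (filter (\<lambda>a. a \<in> complex_of_real ` S) as)"
proof -
  let ?Q = "\<lambda>a. a \<in> complex_of_real ` S"
  define R where "R = {x. x \<in> S \<and> complex_of_real x \<in> set as}"
  have roots: "poly (\<Prod>a\<leftarrow>as. [:- a, 1:]) (complex_of_real x) = 0 \<longleftrightarrow> complex_of_real x \<in> set as"
    for x
    by (auto simp: poly_prod_list_zero_iff)
  have "finite (complex_of_real ` R)"
    by (rule finite_subset[of _ "set as"]) (auto simp: R_def)
  moreover have "set (filter ?Q as) \<subseteq> complex_of_real ` R"
    by (auto simp: R_def)
  ultimately have "length (filter ?Q as) = (\<Sum>y\<in>complex_of_real ` R. count_list (filter ?Q as) y)"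
    by (simp add: sum_count_set)
  also have "\<dots> = (\<Sum>x\<in>R. count_list as (complex_of_real x))"
    by (subst sum.reindex) (auto simp: inj_on_def R_def count_list_filter)
  also have "\<dots> = eig_count A S"
    unfolding eig_count_def assms roots order_prod_linear_factors R_def ..
  finally show ?thesis ..
qed

lemma length_filter_norm_gt_le:
  fixes as :: "'a::real_normed_vector list"
  assumes "K > 0"
  shows "real (length (filter (\<lambda>a. K < norm a) as)) \<le> (\<Sum>a\<leftarrow>as. norm a ^ 2) / K^2"
proof (induction as)
  case (Cons a as)
  have "K < norm a \<Longrightarrow> 1 \<le> norm a ^ 2 / K^2"
    using assms by (simp add: power_strict_mono less_imp_le)
  then show ?case
    using Cons by (auto simp: add_divide_distrib intro: add_mono add_increasing)
qed simp

lemma to_mat_carrier: "to_mat n A \<in> carrier_mat n n"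
  by (simp add: to_mat_def)

lemma hermitian_eigenvalue_real:
  assumes herm: "hermitian_fun n A" and ev: "eigenvalue (to_mat n A) l"
  shows "l \<in> \<real>"
proof -
  obtain v where v: "eigenvector (to_mat n A) v l"
    using ev unfolding eigenvalue_def by blast
  have vc: "v \<in> carrier_vec n" and vnz: "v \<noteq> 0\<^sub>v n" and eq: "to_mat n A *\<^sub>v v = l \<cdot>\<^sub>v v"
    using v unfolding eigenvector_def by (auto simp: to_mat_def)
  have row: "(\<Sum>j<n. A i j * v $ j) = l * v $ i" if "i < n" for i
    using arg_cong[OF eq, of "\<lambda>w. w $ i"] that vc
    by (simp add: to_mat_def scalar_prod_def atLeast0LessThan)
  define s where "s = (\<Sum>i<n. cnj (v $ i) * (\<Sum>j<n. A i j * v $ j))"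
  define r where "r = (\<Sum>i<n. cmod (v $ i) ^ 2)"
  have s_eq: "s = l * complex_of_real r"
  proof -
    have "s = (\<Sum>i<n. l * (cnj (v $ i) * v $ i))"
      unfolding s_def by (rule sum.cong) (simp_all add: row)
    also have "\<dots> = l * complex_of_real r"
      unfolding r_def sum_distrib_left of_real_sum
      by (rule sum.cong) (simp_all add: mult.commute flip: complex_norm_square)
    finally show ?thesis .
  qed
  have s_real: "cnj s = s"
  proof -
    have "cnj s = (\<Sum>i<n. \<Sum>j<n. v $ i * cnj (A i j) * cnj (v $ j))"
      unfolding s_def by (simp add: sum_distrib_left mult.assoc)
    also have "\<dots> = (\<Sum>i<n. \<Sum>j<n. v $ i * A j i * cnj (v $ j))"
      using herm unfolding hermitian_fun_def
      by (intro sum.cong refl) (metis complex_cnj_cnj lessThan_iff)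
    also have "\<dots> = s"
      unfolding s_def by (subst sum.swap) (simp add: sum_distrib_left mult.commute mult.left_commute)
    finally show ?thesis .
  qed
  have "r > 0"
  proof -
    obtain i where i: "i < n" "v $ i \<noteq> 0"
      using vnz vc by (metis eq_vecI carrier_vecD index_zero_vec(1,2))
    then have "0 < cmod (v $ i) ^ 2" by simp
    also have "\<dots> \<le> r"
      unfolding r_def by (rule member_le_sum) (use i in auto)
    finally show ?thesis .
  qed
  with s_eq s_real have "cnj l = l" by simp
  then show ?thesis by (simp add: Reals_cnj_iff)
qed

section \<open>Trace and the Frobenius norm\<close>

definition mat_trace :: "'a::comm_ring_1 mat \<Rightarrow> 'a" where
  "mat_trace A = (\<Sum>i<dim_row A. A $$ (i, i))"

lemma mat_trace_mult:
  assumes "A \<in> carrier_mat n m" "B \<in> carrier_mat m n"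
  shows "mat_trace (A * B) = (\<Sum>i<n. \<Sum>k<m. A $$ (i, k) * B $$ (k, i))"
  using assms unfolding mat_trace_def
  by (intro sum.cong refl) (auto simp: scalar_prod_def atLeast0LessThan)

lemma mat_trace_mult_comm:
  assumes "A \<in> carrier_mat n m" "B \<in> carrier_mat m n"
  shows "mat_trace (A * B) = mat_trace (B * A)"
  unfolding mat_trace_mult[OF assms] mat_trace_mult[OF assms(2,1)]
  by (subst sum.swap) (simp add: mult.commute)

lemma mat_trace_similar:
  assumes "similar_mat_wit A B P Q"
  shows "mat_trace A = mat_trace B"
proof -
  obtain n where carr: "{A, B, P, Q} \<subseteq> carrier_mat n n"
    and QP: "Q * P = 1\<^sub>m n" and A: "A = P * B * Q"
    using assms unfolding similar_mat_wit_def Let_def by blast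
  then have "mat_trace A = mat_trace (P * (B * Q))"
    by (simp add: assoc_mult_mat[of P n n B n Q n])
  also have "\<dots> = mat_trace (B * Q * P)"
    using carr by (subst mat_trace_mult_comm[of _ n n]) auto
  also have "B * Q * P = B"
    using carr QP assoc_mult_mat[of B n n Q n P n] right_mult_one_mat[of B n n] by simp
  finally show ?thesis .
qed

lemma mat_trace_square_upper_triangular:
  assumes "T \<in> carrier_mat n n" "upper_triangular T"
  shows "mat_trace (T * T) = (\<Sum>a\<leftarrow>diag_mat T. a ^ 2)"
proof -
  have "T $$ (i, k) * T $$ (k, i) = (if k = i then T $$ (i, i) ^ 2 else 0)"
    if "i < n" "k < n" for i k
    using assms that unfolding upper_triangular_def
    by (cases "k < i"; cases "i < k") (auto simp: power2_eq_square)
  then have "mat_trace (T * T) = (\<Sum>i<n. T $$ (i, i) ^ 2)"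
    by (simp add: mat_trace_mult[OF assms(1) assms(1)])
  also have "\<dots> = (\<Sum>a\<leftarrow>diag_mat T. a ^ 2)"
    using assms(1)
    by (simp add: diag_mat_def interv_sum_list_conv_sum_set_nat lessThan_atLeast0 comp_def)
  finally show ?thesis .
qed

definition frobenius_norm_sq :: "nat \<Rightarrow> (nat \<Rightarrow> nat \<Rightarrow> complex) \<Rightarrow> real" where
  "frobenius_norm_sq n A = (\<Sum>i<n. \<Sum>j<n. cmod (A i j) ^ 2)"

lemma mat_trace_square_hermitian:
  assumes "hermitian_fun n A"
  shows "mat_trace (to_mat n A * to_mat n A) = complex_of_real (frobenius_norm_sq n A)"
proof -
  have "A i k * A k i = complex_of_real (cmod (A i k) ^ 2)" if "i < n" "k < n" for i k
  proof -
    have "A k i = cnj (A i k)"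
      using assms that unfolding hermitian_fun_def by blast
    then show ?thesis by (simp only: complex_norm_square)
  qed
  then show ?thesis
    unfolding mat_trace_mult[of _ n n, OF to_mat_carrier to_mat_carrier] frobenius_norm_sq_def
    by (simp add: to_mat_def)
qed

lemma hermitian_eigenvalues_sum_sq:
  assumes herm: "hermitian_fun n A" and cp: "char_poly (to_mat n A) = (\<Prod>a\<leftarrow>as. [:- a, 1:])"
  shows "(\<Sum>a\<leftarrow>as. cmod a ^ 2) = frobenius_norm_sq n A"
proof -
  note carr = to_mat_carrier[of n A]
  obtain T P Q where "schur_decomposition (to_mat n A) as = (T, P, Q)"
    by (cases "schur_decomposition (to_mat n A) as") auto
  from schur_decomposition[OF carr cp this]
  have sim: "similar_mat_wit (to_mat n A) T P Q" and ut: "upper_triangular T"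
    and diag: "diag_mat T = as"
    by auto
  have T: "T \<in> carrier_mat n n"
    using similar_mat_witD2[OF carr sim] by auto
  have "eigenvalue (to_mat n A) a" if "a \<in> set as" for a
    using that by (simp add: eigenvalue_root_char_poly[OF carr] cp poly_prod_list_zero_iff)
  then have real: "a \<in> \<real>" if "a \<in> set as" for a
    using that hermitian_eigenvalue_real[OF herm] by blast
  have "similar_mat_wit (to_mat n A ^\<^sub>m 2) (T ^\<^sub>m 2) P Q"
    by (rule similar_mat_wit_pow[OF sim])
  then have "mat_trace (to_mat n A * to_mat n A) = mat_trace (T * T)"
    using carr T by (simp add: numeral_2_eq_2 mat_trace_similar)
  then have "complex_of_real (frobenius_norm_sq n A) = (\<Sum>a\<leftarrow>as. a ^ 2)"
    unfolding mat_trace_square_hermitian[OF herm] mat_trace_square_upper_triangular[OF T ut] diag .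
  also have "\<dots> = (\<Sum>a\<leftarrow>as. complex_of_real (cmod a ^ 2))"
  proof (intro arg_cong[where f = sum_list] map_cong refl)
    fix a assume "a \<in> set as"
    then obtain r where "a = complex_of_real r"
      using real Reals_cases by metis
    then show "a ^ 2 = complex_of_real (cmod a ^ 2)" by simp
  qed
  also have "\<dots> = complex_of_real (\<Sum>a\<leftarrow>as. cmod a ^ 2)"
    by (induction as) auto
  finally show ?thesis by simp
qed

lemma eig_count_abs_gt_le:
  assumes herm: "hermitian_fun n A" and K: "K > 0"
  shows "eig_count (to_mat n A) {x. K < \<bar>x\<bar>} \<le> n"
    and "real (eig_count (to_mat n A) {x. K < \<bar>x\<bar>}) \<le> frobenius_norm_sq n A / K^2"
proof -
  obtain as where cp: "char_poly (to_mat n A) = (\<Prod>a\<leftarrow>as. [:- a, 1:])" and len: "length as = n"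
    using char_poly_factorized[OF to_mat_carrier] by blast
  have count: "eig_count (to_mat n A) {x. K < \<bar>x\<bar>}
      = length (filter (\<lambda>a. a \<in> complex_of_real ` {x. K < \<bar>x\<bar>}) as)"
    by (rule eig_count_char_poly_factors[OF cp])
  then show "eig_count (to_mat n A) {x. K < \<bar>x\<bar>} \<le> n"
    using len by (metis length_filter_le)
  have "length (filter (\<lambda>a. a \<in> complex_of_real ` {x. K < \<bar>x\<bar>}) as)
      \<le> length (filter (\<lambda>a. K < cmod a) as)"
    by (induction as) auto
  then have "real (eig_count (to_mat n A) {x. K < \<bar>x\<bar>}) \<le> (\<Sum>a\<leftarrow>as. cmod a ^ 2) / K^2"
    unfolding count using length_filter_norm_gt_le[OF K, of as] by linarith
  then show "real (eig_count (to_mat n A) {x. K < \<bar>x\<bar>}) \<le> frobenius_norm_sq n A / K^2"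
    by (simp add: hermitian_eigenvalues_sum_sq[OF herm cp])
qed

abbreviation sqrt_scaled :: "nat \<Rightarrow> (nat \<Rightarrow> nat \<Rightarrow> complex) \<Rightarrow> nat \<Rightarrow> nat \<Rightarrow> complex" where
  "sqrt_scaled n A \<equiv> \<lambda>i j. A i j / complex_of_real (sqrt (real n))"

lemma esd_sqrt_scaled_abs_gt_le:
  assumes herm: "hermitian_fun n A" and n: "n \<ge> 1" and K: "K > 0"
  defines "Z \<equiv> sqrt_scaled n A"
  shows "esd n Z {x. K < \<bar>x\<bar>} \<le> 1"
    and "esd n Z {x. K < \<bar>x\<bar>} \<le> frobenius_norm_sq n A / (real n ^ 2 * K ^ 2)"
proof -
  have herm_Z: "hermitian_fun n Z"
    unfolding hermitian_fun_def
  proof (intro allI impI)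
    fix i j assume "i < n" "j < n"
    then have "A i j = cnj (A j i)"
      using herm unfolding hermitian_fun_def by blast
    then show "Z i j = cnj (Z j i)"
      unfolding Z_def by simp
  qed
  have n_pos: "real n > 0"
    using n by simp
  have frob_Z: "frobenius_norm_sq n Z = frobenius_norm_sq n A / real n"
    unfolding frobenius_norm_sq_def Z_def
    by (simp add: norm_divide power_divide sum_divide_distrib)
  show "esd n Z {x. K < \<bar>x\<bar>} \<le> 1"
    using eig_count_abs_gt_le(1)[OF herm_Z K] n_pos unfolding esd_def by simp
  have "esd n Z {x. K < \<bar>x\<bar>} \<le> frobenius_norm_sq n Z / K^2 / real n"
    unfolding esd_def by (rule divide_right_mono[OF eig_count_abs_gt_le(2)[OF herm_Z K]]) simp
  also have "\<dots> = frobenius_norm_sq n A / (real n ^ 2 * K ^ 2)"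
    unfolding frob_Z by (simp add: power2_eq_square)
  finally show "esd n Z {x. K < \<bar>x\<bar>} \<le> frobenius_norm_sq n A / (real n ^ 2 * K ^ 2)" .
qed

section \<open>Tail estimates for random matrices\<close>

lemma (in prob_space) integral_le_prob_gt_plus:
  fixes f g :: "'a \<Rightarrow> real"
  assumes g: "g \<in> borel_measurable M" and d: "d \<ge> 0"
    and f_le_1: "\<And>\<omega>. \<omega> \<in> space M \<Longrightarrow> f \<omega> \<le> 1"
    and f_le_d: "\<And>\<omega>. \<omega> \<in> space M \<Longrightarrow> g \<omega> \<le> c \<Longrightarrow> f \<omega> \<le> d"
  shows "integral\<^sup>L M f \<le> prob {\<omega>\<in>space M. c < g \<omega>} + d"
proof (cases "integrable M f")
  case True
  define G where "G = {\<omega>\<in>space M. c < g \<omega>}"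
  have G: "G \<in> events"
    unfolding G_def using g borel_measurable_iff_greater by blast
  have "integral\<^sup>L M f \<le> integral\<^sup>L M (\<lambda>\<omega>. indicator G \<omega> + d)"
  proof (rule integral_mono[OF True])
    show "integrable M (\<lambda>\<omega>. indicator G \<omega> + d)"
      using G by (auto simp: emeasure_eq_measure)
    show "f \<omega> \<le> indicator G \<omega> + d" if "\<omega> \<in> space M" for \<omega>
      using that f_le_1[OF that] f_le_d[OF that] d by (cases "c < g \<omega>") (auto simp: G_def indicator_def)
  qed
  also have "\<dots> = prob G + d"
    using G by (simp add: emeasure_eq_measure prob_space)
  finally show ?thesis unfolding G_def .
next
  case False
  then show ?thesis using d by (simp add: not_integrable_integral_eq)
qed

lemma (in prob_space) prob_gt_tendsto_0:
  fixes g :: "'a \<Rightarrow> real"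
  assumes "g \<in> borel_measurable M"
  shows "((\<lambda>c. prob {\<omega>\<in>space M. c < g \<omega>}) \<longlongrightarrow> 0) at_top"
proof -
  have distr: "real_distribution (distr M borel g)"
    using assms by simp
  have "prob {\<omega>\<in>space M. c < g \<omega>} = 1 - cdf (distr M borel g) c" for c
  proof -
    have "cdf (distr M borel g) c = prob {\<omega>\<in>space M. g \<omega> \<le> c}"
      using assms by (simp add: cdf_def measure_distr vimage_def Int_def conj_commute)
    moreover have "{\<omega>\<in>space M. c < g \<omega>} = space M - {\<omega>\<in>space M. g \<omega> \<le> c}"
      by auto
    moreover have "{\<omega>\<in>space M. g \<omega> \<le> c} \<in> events"
      using assms borel_measurable_iff_le by blast
    ultimately show ?thesis by (simp add: prob_compl)
  qed
  then show ?thesis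
    using tendsto_diff[OF tendsto_const real_distribution.cdf_lim_at_top_prob[OF distr], of 1] by simp
qed

lemma borel_measurable_frobenius_norm_sq:
  assumes "\<And>i j. i < n \<Longrightarrow> j < n \<Longrightarrow> (\<lambda>\<omega>. X \<omega> i j) \<in> borel_measurable M"
  shows "(\<lambda>\<omega>. frobenius_norm_sq n (X \<omega>)) \<in> borel_measurable M"
  unfolding frobenius_norm_sq_def using assms by measurable

definition frobenius_tail_sq :: "real \<Rightarrow> nat \<Rightarrow> (nat \<Rightarrow> nat \<Rightarrow> complex) \<Rightarrow> real" where
  "frobenius_tail_sq M n A = (\<Sum>i<n. \<Sum>j<n. if cmod (A i j) > M then cmod (A i j) ^ 2 else 0)"

lemma frobenius_norm_sq_le_tail:
  assumes "M \<ge> 0"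
  shows "frobenius_norm_sq n A \<le> real n ^ 2 * M ^ 2 + frobenius_tail_sq M n A"
proof -
  have "cmod z ^ 2 \<le> M ^ 2 + (if cmod z > M then cmod z ^ 2 else 0)" for z
    using assms by (cases "cmod z > M") (auto intro: power_mono)
  then have "frobenius_norm_sq n A \<le> (\<Sum>i<n. \<Sum>j<n. M ^ 2 + (if cmod (A i j) > M then cmod (A i j) ^ 2 else 0))"
    unfolding frobenius_norm_sq_def by (intro sum_mono)
  then show ?thesis
    by (simp add: frobenius_tail_sq_def sum.distrib power2_eq_square)
qed

lemma borel_measurable_frobenius_tail_sq:
  assumes "\<And>i j. i < n \<Longrightarrow> j < n \<Longrightarrow> (\<lambda>\<omega>. X \<omega> i j) \<in> borel_measurable M"
  shows "(\<lambda>\<omega>. frobenius_tail_sq K n (X \<omega>)) \<in> borel_measurable M"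
  unfolding frobenius_tail_sq_def using assms by measurable

lemma property_L_uniform:
  assumes "property_L P X" and "\<epsilon> > 0"
  obtains M N where "M \<ge> 0"
    and "\<And>n. n \<ge> N \<Longrightarrow> measure P {\<omega>\<in>space P. 1 < frobenius_tail_sq M n (X n \<omega>) / real n ^ 2} < \<epsilon>"
proof -
  let ?p = "\<lambda>M n. measure P {\<omega>\<in>space P. 1 < frobenius_tail_sq M n (X n \<omega>) / real n ^ 2}"
  have "((\<lambda>M. limsup (\<lambda>n. ereal (?p M n))) \<longlongrightarrow> 0) at_top"
    using assms(1) unfolding property_L_def frobenius_tail_sq_def by (auto dest: spec[of _ 1])
  then have "eventually (\<lambda>M. M \<ge> 0 \<and> limsup (\<lambda>n. ereal (?p M n)) < ereal \<epsilon>) at_top"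
    using assms(2)
    by (intro eventually_conj eventually_ge_at_top order_tendstoD(2)) (auto simp: zero_ereal_def)
  then obtain M where "M \<ge> 0" and "limsup (\<lambda>n. ereal (?p M n)) < ereal \<epsilon>"
    using eventually_happens'[OF trivial_limit_at_top_linorder] by blast
  moreover from this have "eventually (\<lambda>n. ereal (?p M n) < ereal \<epsilon>) sequentially"
    by (intro Limsup_lessD)
  ultimately show ?thesis
    using that by (auto simp: eventually_sequentially)
qed

lemma esd_tail_integral_le:
  fixes X :: "'a \<Rightarrow> nat \<Rightarrow> nat \<Rightarrow> complex"
  assumes P: "prob_space P"
    and meas: "\<And>i j. i < n \<Longrightarrow> j < n \<Longrightarrow> (\<lambda>\<omega>. X \<omega> i j) \<in> borel_measurable P"
    and herm: "\<And>\<omega>. \<omega> \<in> space P \<Longrightarrow> hermitian_fun n (X \<omega>)"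
    and n: "n \<ge> 1" and K: "K > 0" and c: "c \<ge> 0"
  shows "(\<integral>\<omega>. esd n (sqrt_scaled n (X \<omega>)) {x. \<bar>x\<bar> > K} \<partial>P)
    \<le> measure P {\<omega>\<in>space P. c < frobenius_norm_sq n (X \<omega>) / real n ^ 2} + c / K^2"
proof -
  interpret prob_space P by (rule P)
  have "(\<lambda>\<omega>. frobenius_norm_sq n (X \<omega>) / real n ^ 2) \<in> borel_measurable P"
    using borel_measurable_frobenius_norm_sq[OF meas] by measurable
  then show ?thesis
  proof (rule integral_le_prob_gt_plus)
    fix \<omega> assume \<omega>: "\<omega> \<in> space P"
    note bounds = esd_sqrt_scaled_abs_gt_le[OF herm[OF \<omega>] n K]
    show "esd n (sqrt_scaled n (X \<omega>)) {x. \<bar>x\<bar> > K} \<le> 1"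
      using bounds(1) by simp
    assume "frobenius_norm_sq n (X \<omega>) / real n ^ 2 \<le> c"
    then have "frobenius_norm_sq n (X \<omega>) / (real n ^ 2 * K ^ 2) \<le> c / K^2"
      by (simp add: divide_right_mono flip: divide_divide_eq_left)
    then show "esd n (sqrt_scaled n (X \<omega>)) {x. \<bar>x\<bar> > K} \<le> c / K^2"
      using bounds(2) by simp
  qed (simp add: c)
qed

lemma eventually_div_sq_less:
  fixes c \<delta> :: real
  assumes "\<delta> > 0"
  shows "eventually (\<lambda>K. K > 0 \<and> c / K^2 < \<delta>) at_top"
proof (intro eventually_conj eventually_gt_at_top order_tendstoD(2))
  show "((\<lambda>K. c / K^2) \<longlongrightarrow> 0) at_top"
    by real_asymp
qed (fact assms)

lemma eventually_esd_tail_less: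
  fixes X :: "'a \<Rightarrow> nat \<Rightarrow> nat \<Rightarrow> complex"
  assumes P: "prob_space P"
    and meas: "\<And>i j. i < n \<Longrightarrow> j < n \<Longrightarrow> (\<lambda>\<omega>. X \<omega> i j) \<in> borel_measurable P"
    and herm: "\<And>\<omega>. \<omega> \<in> space P \<Longrightarrow> hermitian_fun n (X \<omega>)"
    and n: "n \<ge> 1" and \<epsilon>: "\<epsilon> > 0"
  shows "eventually (\<lambda>K.
    (\<integral>\<omega>. esd n (sqrt_scaled n (X \<omega>)) {x. \<bar>x\<bar> > K} \<partial>P) < \<epsilon>) at_top"
proof -
  interpret prob_space P by (rule P)
  let ?F = "\<lambda>\<omega>. frobenius_norm_sq n (X \<omega>) / real n ^ 2"
  have "(\<lambda>\<omega>. frobenius_norm_sq n (X \<omega>)) \<in> borel_measurable P"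
    using meas by (rule borel_measurable_frobenius_norm_sq)
  then have "((\<lambda>c. prob {\<omega>\<in>space P. c < ?F \<omega>}) \<longlongrightarrow> 0) at_top"
    by (intro prob_gt_tendsto_0 borel_measurable_divide) auto
  then have "eventually (\<lambda>c. c \<ge> 0 \<and> prob {\<omega>\<in>space P. c < ?F \<omega>} < \<epsilon> / 2) at_top"
    using \<epsilon> by (intro eventually_conj eventually_ge_at_top order_tendstoD(2)) auto
  then obtain c where "c \<ge> 0" and c: "prob {\<omega>\<in>space P. c < ?F \<omega>} < \<epsilon> / 2"
    using eventually_happens'[OF trivial_limit_at_top_linorder] by blast
  show ?thesis
    using eventually_div_sq_less[OF half_gt_zero[OF \<epsilon>], of c]
  proof eventually_elim
    case (elim K)
    then have "(\<integral>\<omega>. esd n (sqrt_scaled n (X \<omega>)) {x. \<bar>x\<bar> > K} \<partial>P)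
        \<le> prob {\<omega>\<in>space P. c < ?F \<omega>} + c / K^2"
      using \<open>c \<ge> 0\<close> by (intro esd_tail_integral_le[OF P meas herm n]) auto
    with c elim show ?case
      by linarith
  qed
qed

lemma property_L_eventually_esd_tail_less:
  fixes X :: "nat \<Rightarrow> 'a \<Rightarrow> nat \<Rightarrow> nat \<Rightarrow> complex"
  assumes P: "prob_space P"
    and meas: "\<And>n i j. i < n \<Longrightarrow> j < n \<Longrightarrow> (\<lambda>\<omega>. X n \<omega> i j) \<in> borel_measurable P"
    and herm: "\<And>n \<omega>. \<omega> \<in> space P \<Longrightarrow> hermitian_fun n (X n \<omega>)"
    and L: "property_L P X" and \<epsilon>: "\<epsilon> > 0"
  obtains N where "eventually (\<lambda>K. \<forall>n\<ge>N. n \<ge> 1 \<longrightarrow>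
    (\<integral>\<omega>. esd n (sqrt_scaled n (X n \<omega>)) {x. \<bar>x\<bar> > K} \<partial>P) < \<epsilon>) at_top"
proof -
  interpret prob_space P by (rule P)
  obtain M N where "M \<ge> 0" and
    N: "\<And>n. n \<ge> N \<Longrightarrow> prob {\<omega>\<in>space P. 1 < frobenius_tail_sq M n (X n \<omega>) / real n ^ 2} < \<epsilon> / 2"
    using property_L_uniform[OF L] \<epsilon> by (metis half_gt_zero)
  let ?F = "\<lambda>n \<omega>. frobenius_norm_sq n (X n \<omega>) / real n ^ 2"
  have prob_small: "prob {\<omega>\<in>space P. M^2 + 1 < ?F n \<omega>} < \<epsilon> / 2" if "n \<ge> N" "n \<ge> 1" for n
  proof -
    have "{\<omega>\<in>space P. M^2 + 1 < ?F n \<omega>}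
        \<subseteq> {\<omega>\<in>space P. 1 < frobenius_tail_sq M n (X n \<omega>) / real n ^ 2}"
      using \<open>n \<ge> 1\<close>
      by (auto simp: field_simps dest: order.strict_trans2[OF _ frobenius_norm_sq_le_tail[OF \<open>M \<ge> 0\<close>]])
    moreover have "{\<omega>\<in>space P. 1 < frobenius_tail_sq M n (X n \<omega>) / real n ^ 2} \<in> events"
      using borel_measurable_frobenius_tail_sq[OF meas] by measurable
    ultimately show ?thesis
      using N[OF \<open>n \<ge> N\<close>] by (meson finite_measure_mono order.strict_trans1)
  qed
  have tail: "(\<integral>\<omega>. esd n (sqrt_scaled n (X n \<omega>)) {x. \<bar>x\<bar> > K} \<partial>P)
      \<le> prob {\<omega>\<in>space P. c < ?F n \<omega>} + c / K^2"
    if "n \<ge> 1" "K > 0" "c \<ge> 0" for n K c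
    using P meas herm that by (rule esd_tail_integral_le)
  have "eventually (\<lambda>K. \<forall>n\<ge>N. n \<ge> 1 \<longrightarrow>
    (\<integral>\<omega>. esd n (sqrt_scaled n (X n \<omega>)) {x. \<bar>x\<bar> > K} \<partial>P) < \<epsilon>) at_top"
    using eventually_div_sq_less[OF half_gt_zero[OF \<epsilon>], of "M^2 + 1"]
  proof eventually_elim
    case (elim K)
    show ?case
    proof (intro allI impI)
      fix n assume "n \<ge> N" "n \<ge> 1"
      have "(\<integral>\<omega>. esd n (sqrt_scaled n (X n \<omega>)) {x. \<bar>x\<bar> > K} \<partial>P)
          \<le> prob {\<omega>\<in>space P. M^2 + 1 < ?F n \<omega>} + (M^2 + 1) / K^2"
        using elim by (intro tail \<open>n \<ge> 1\<close>) auto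
      with prob_small[OF \<open>n \<ge> N\<close> \<open>n \<ge> 1\<close>] elim
      show "(\<integral>\<omega>. esd n (sqrt_scaled n (X n \<omega>)) {x. \<bar>x\<bar> > K} \<partial>P) < \<epsilon>"
        by linarith
    qed
  qed
  then show ?thesis by (rule that)
qed

theorem proposition2p7:
  fixes P :: "'a measure" and X :: "nat \<Rightarrow> 'a \<Rightarrow> nat \<Rightarrow> nat \<Rightarrow> complex"
  assumes "prob_space P"
    and "\<And>n i j. i < n \<Longrightarrow> j < n \<Longrightarrow> (\<lambda>\<omega>. X n \<omega> i j) \<in> borel_measurable P"
    and "\<And>n \<omega>. \<omega> \<in> space P \<Longrightarrow> hermitian_fun n (X n \<omega>)"
    and "property_L P X"
  shows "\<forall>\<epsilon>>0. \<exists>K::real. \<forall>n\<ge>1.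
    (\<integral>\<omega>. esd n (\<lambda>i j. X n \<omega> i j / complex_of_real (sqrt (real n))) {x. \<bar>x\<bar> > K} \<partial>P) < \<epsilon>"
proof (intro allI impI)
  fix \<epsilon> :: real assume "\<epsilon> > 0"
  let ?E = "\<lambda>n K. \<integral>\<omega>. esd n (sqrt_scaled n (X n \<omega>)) {x. \<bar>x\<bar> > K} \<partial>P"
  obtain N where large_n: "eventually (\<lambda>K. \<forall>n\<ge>N. n \<ge> 1 \<longrightarrow> ?E n K < \<epsilon>) at_top"
    using property_L_eventually_esd_tail_less[OF assms \<open>\<epsilon> > 0\<close>] .
  have "eventually (\<lambda>K. \<forall>n\<in>{1..<N}. ?E n K < \<epsilon>) at_top"
    using assms(1-3) \<open>\<epsilon> > 0\<close> by (intro eventually_ball_finite ballI eventually_esd_tail_less) auto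
  with large_n have "eventually (\<lambda>K. \<forall>n\<ge>1. ?E n K < \<epsilon>) at_top"
    by eventually_elim (metis atLeastLessThan_iff not_le)
  then show "\<exists>K. \<forall>n\<ge>1. ?E n K < \<epsilon>"
    using eventually_happens'[OF trivial_limit_at_top_linorder] by blast
qed

end
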